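(* Let $\Pi$ be a finite, satisfiable set of linear constraints over $x_1,\dots,x_D$ and $\mathrm{CL}$ the constraint layer built from $\Pi$ and the ordering $x_1,\dots,x_D$. Then for every $\tilde x\in\mathbb{R}^D$ and every $i=1,\dots,D$ we have $ub_i\ge lb_i$, and moreover $\mathrm{CL}(\tilde x)_i=\min^i(\max^i(\tilde x_i,lb_i),ub_i)=\max^i(\min^i(\tilde x_i,ub_i),lb_i)$.
   Context: A constraint is a linear inequality $\phi:\ \sum_{k=1}^D w_k x_k + b \unrhd 0$ with $w_k,b\in\mathbb{R}$ and $\unrhd\in\{\ge,>\}$; it is strict if $\unrhd$ is $>$. A point $\tilde x\in\mathbb{R}^D$ satisfies $\phi$ if $\sum_k w_k\tilde x_k+b\unrhd 0$, and satisfies a set $\Pi$ if it satisfies every member; $\Pi$ is satisfiable if some point satisfies it. Variable $x_j$ appears positively (resp. negatively) in $\phi$ if $w_j>0$ (resp. $w_j<0$). For a set $\Gamma$ of constraints, $\Gamma^+_j$ (resp. $\Gamma^-_j$) is the subset in which $x_j$ appears positively (resp. negatively). Reduction: for $\phi^1=\sum_k w^1_kx_k+b^1\unrhd^1 0\in\Gamma^-_j$ and $\phi^2=\sum_k w^2_kx_k+b^2\unrhd^2 0\in\Gamma^+_j$, $red_j(\phi^1,\phi^2)$ is $\sum_{k\ne j}(w^1_k|w^2_j|+w^2_k|w^1_j|)x_k + b^1|w^2_j|+b^2|w^1_j| \unrhd 0$, where $\unrhd$ is $\ge$ if both $\unrhd^1,\unrhd^2$ are $\ge$, and $>$ otherwise.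 Sets $\Pi_i$: $\Pi_D=\Pi$, and for $i<D$, with $j=i+1$, $\Pi_i=(\Pi_j\setminus(\Pi^-_j\cup\Pi^+_j))\cup\{red_j(\phi^1,\phi^2):\phi^1\in\Pi^-_j,\phi^2\in\Pi^+_j\}$, where $\Pi^\pm_j$ means $(\Pi_j)^\pm_j$. (Thus only $x_1,\dots,x_i$ occur in $\Pi_i$; we write $\Pi_i^\pm$ for $(\Pi_i)^\pm_i$.) For $\phi=\sum_kw_kx_k+b\unrhd0$ with $w_i\neq0$, let $\varepsilon^\phi_i=-\sum_{k\ne i}(w_k/w_i)x_k-b/w_i$; for $\phi\in\Pi_i$ it depends only on $x_1,\dots,x_{i-1}$. Constraint layer: given $\tilde x\in\mathbb{R}^D$, $\mathrm{CL}(\tilde x)\in\mathbb{R}^D$ is computed coordinatewise for $i=1,\dots,D$. Let $\varepsilon^\phi_i(\mathrm{CL}(\tilde x))$ denote $\varepsilon^\phi_i$ evaluated at the already computed values $\mathrm{CL}(\tilde x)_1,\dots,\mathrm{CL}(\tilde x)_{i-1}$, and set $ub_i=\min\{\varepsilon^\phi_i(\mathrm{CL}(\tilde x)):\phi\in\Pi_i^-\}$, $lb_i=\max\{\varepsilon^\phi_i(\mathrm{CL}(\tilde x)):\phi\in\Pi_i^+\}$ (with $\min\emptyset=+\infty$, $\max\emptyset=-\infty$). Then $\mathrm{CL}(\tilde x)_i=\min^i(\max^i(\tilde x_i,lb_i),ub_i)$, where $\max^i(a,lb_i)$ equals $v=\max(a,lb_i)$ unless some strict $\phi\in\Pi_i^+$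 has $v=\varepsilon^\phi_i(\mathrm{CL}(\tilde x))$, in which case it equals $v+\epsilon$ for a chosen $\epsilon>0$ small enough that $lb_i+\epsilon< ub_i$; symmetrically $\min^i(a,ub_i)$ equals $u=\min(a,ub_i)$ unless some strict $\phi\in\Pi_i^-$ has $u=\varepsilon^\phi_i(\mathrm{CL}(\tilde x))$, in which case it equals $u-\epsilon$ for a chosen $\epsilon>0$ small enough that $ub_i-\epsilon>lb_i$ (the same $\epsilon$ choices being used on both sides of the displayed identity). *)

theory Defs
  imports Complex_Main "HOL-Library.Extended_Real"
begin

text \<open>A linear constraint  sum_k coef k * x_k + const (>= or >) 0 over variables
  x_1,...,x_D (indices 1..D; coefficients outside 1..D are required to be 0).\<close>
datatype lincon = LC (coef: "nat \<Rightarrow> real") (const: real) (strict: bool)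

definition lhs :: "nat \<Rightarrow> lincon \<Rightarrow> (nat \<Rightarrow> real) \<Rightarrow> real" where
  "lhs D \<phi> x = (\<Sum>k\<in>{1..D}. coef \<phi> k * x k) + const \<phi>"

definition sat :: "nat \<Rightarrow> (nat \<Rightarrow> real) \<Rightarrow> lincon \<Rightarrow> bool" where
  "sat D x \<phi> = (if strict \<phi> then lhs D \<phi> x > 0 else lhs D \<phi> x \<ge> 0)"

definition satisfiable :: "nat \<Rightarrow> lincon set \<Rightarrow> bool" where
  "satisfiable D \<Pi> = (\<exists>x. \<forall>\<phi>\<in>\<Pi>. sat D x \<phi>)"

definition posc :: "nat \<Rightarrow> lincon set \<Rightarrow> lincon set" where
  "posc j \<Gamma> = {\<phi>\<in>\<Gamma>. coef \<phi> j > 0}"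

definition negc :: "nat \<Rightarrow> lincon set \<Rightarrow> lincon set" where
  "negc j \<Gamma> = {\<phi>\<in>\<Gamma>. coef \<phi> j < 0}"

definition red :: "nat \<Rightarrow> lincon \<Rightarrow> lincon \<Rightarrow> lincon" where
  "red j \<phi>1 \<phi>2 = LC
     (\<lambda>k. if k = j then 0 else coef \<phi>1 k * \<bar>coef \<phi>2 j\<bar> + coef \<phi>2 k * \<bar>coef \<phi>1 j\<bar>)
     (const \<phi>1 * \<bar>coef \<phi>2 j\<bar> + const \<phi>2 * \<bar>coef \<phi>1 j\<bar>)
     (strict \<phi>1 \<or> strict \<phi>2)"

definition elim :: "nat \<Rightarrow> lincon set \<Rightarrow> lincon set" where
  "elim j \<Gamma> = (\<Gamma> - (negc j \<Gamma> \<union> posc j \<Gamma>)) \<union>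
     {red j \<phi>1 \<phi>2 | \<phi>1 \<phi>2. \<phi>1 \<in> negc j \<Gamma> \<and> \<phi>2 \<in> posc j \<Gamma>}"

text \<open>elimk n = Pi_{D-n}\<close>
fun elimk :: "lincon set \<Rightarrow> nat \<Rightarrow> nat \<Rightarrow> lincon set" where
  "elimk \<Pi> D 0 = \<Pi>"
| "elimk \<Pi> D (Suc n) = elim (D - n) (elimk \<Pi> D n)"

definition Pis :: "lincon set \<Rightarrow> nat \<Rightarrow> nat \<Rightarrow> lincon set" where
  "Pis \<Pi> D i = elimk \<Pi> D (D - i)"

definition epsv :: "nat \<Rightarrow> lincon \<Rightarrow> nat \<Rightarrow> (nat \<Rightarrow> real) \<Rightarrow> real" where
  "epsv D \<phi> i y = - (\<Sum>k\<in>{1..D} - {i}. (coef \<phi> k / coef \<phi> i) * y k) - const \<phi> / coef \<phi> i"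

definition lbv :: "lincon set \<Rightarrow> nat \<Rightarrow> nat \<Rightarrow> (nat \<Rightarrow> real) \<Rightarrow> ereal" where
  "lbv \<Pi> D i y = Sup ((\<lambda>\<phi>. ereal (epsv D \<phi> i y)) ` posc i (Pis \<Pi> D i))"

definition ubv :: "lincon set \<Rightarrow> nat \<Rightarrow> nat \<Rightarrow> (nat \<Rightarrow> real) \<Rightarrow> ereal" where
  "ubv \<Pi> D i y = Inf ((\<lambda>\<phi>. ereal (epsv D \<phi> i y)) ` negc i (Pis \<Pi> D i))"

definition maxi :: "lincon set \<Rightarrow> nat \<Rightarrow> nat \<Rightarrow> (nat \<Rightarrow> real) \<Rightarrow> real \<Rightarrow> real \<Rightarrow> real" where
  "maxi \<Pi> D i y e a =
     (let v = max (ereal a) (lbv \<Pi> D i y) in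
      if (\<exists>\<phi>\<in>posc i (Pis \<Pi> D i). strict \<phi> \<and> v = ereal (epsv D \<phi> i y))
      then real_of_ereal v + e else real_of_ereal v)"

definition mini :: "lincon set \<Rightarrow> nat \<Rightarrow> nat \<Rightarrow> (nat \<Rightarrow> real) \<Rightarrow> real \<Rightarrow> real \<Rightarrow> real" where
  "mini \<Pi> D i y e a =
     (let u = min (ereal a) (ubv \<Pi> D i y) in
      if (\<exists>\<phi>\<in>negc i (Pis \<Pi> D i). strict \<phi> \<and> u = ereal (epsv D \<phi> i y))
      then real_of_ereal u - e else real_of_ereal u)"

text \<open>Coordinates 1..i of CL(x), computed in order; ep i / em i are the epsilons
  chosen for max^i / min^i at coordinate i. Coordinates > i are 0 (not yet computed).\<close>
fun clvec :: "lincon set \<Rightarrow> nat \<Rightarrow> (nat \<Rightarrow> real) \<Rightarrow> (nat \<Rightarrow> real) \<Rightarrow> (nat \<Rightarrow> real)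
               \<Rightarrow> nat \<Rightarrow> (nat \<Rightarrow> real)" where
  "clvec \<Pi> D x ep em 0 = (\<lambda>_. 0)"
| "clvec \<Pi> D x ep em (Suc i) =
     (let y = clvec \<Pi> D x ep em i in
      y(Suc i := mini \<Pi> D (Suc i) y (em (Suc i)) (maxi \<Pi> D (Suc i) y (ep (Suc i)) (x (Suc i)))))"

definition CL :: "lincon set \<Rightarrow> nat \<Rightarrow> (nat \<Rightarrow> real) \<Rightarrow> (nat \<Rightarrow> real) \<Rightarrow> (nat \<Rightarrow> real)
               \<Rightarrow> (nat \<Rightarrow> real)" where
  "CL \<Pi> D x ep em = clvec \<Pi> D x ep em D"

end

theory Submission
  imports Defs
begin

text \<open>
  By induction on \<open>i\<close>, the coordinates \<open>1..i\<close> of \<open>CL(x)\<close> satisfy \<open>\<Pi>\<^sub>i\<close>.  For \<open>i = 0\<close>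
  this is satisfiability of \<open>\<Pi>\<close>: elimination preserves satisfying points and \<open>\<Pi>\<^sub>0\<close>
  has no variables left.  In the step, each reduction \<open>red\<^sub>i(\<phi>\<^sub>1, \<phi>\<^sub>2)\<close> belongs to
  \<open>\<Pi>\<^sub>i\<^sub>-\<^sub>1\<close>, and its validity at the computed prefix says precisely that the lower
  bound on \<open>x\<^sub>i\<close> coming from \<open>\<phi>\<^sub>2\<close> lies below the upper bound coming from \<open>\<phi>\<^sub>1\<close>,
  strictly if either is strict.  Hence \<open>lb\<^sub>i \<le> ub\<^sub>i\<close>, the two orders of clipping agree,
  and the clipped value satisfies every constraint of \<open>\<Pi>\<^sub>i\<close>.
\<close>

section \<open>Fourier--Motzkin elimination\<close>

lemma finite_elim: "finite \<Gamma> \<Longrightarrow> finite (elim j \<Gamma>)"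
proof -
  assume "finite \<Gamma>"
  moreover have "elim j \<Gamma> \<subseteq> \<Gamma> \<union> (\<lambda>(\<phi>1, \<phi>2). red j \<phi>1 \<phi>2) ` (\<Gamma> \<times> \<Gamma>)"
    unfolding elim_def negc_def posc_def by auto
  ultimately show ?thesis by (simp add: finite_subset)
qed

lemma finite_elimk: "finite \<Pi> \<Longrightarrow> finite (elimk \<Pi> D n)"
  by (induction n) (auto intro: finite_elim)

lemma coef_elimk:
  assumes "\<forall>\<phi>\<in>\<Pi>. \<forall>k. (k = 0 \<or> D < k) \<longrightarrow> coef \<phi> k = 0"
  shows "\<phi> \<in> elimk \<Pi> D n \<Longrightarrow> k = 0 \<or> D - n < k \<Longrightarrow> coef \<phi> k = 0"
proof (induction n arbitrary: \<phi> k)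
  case 0
  then show ?case using assms by auto
next
  case (Suc n)
  then have k: "k = D - n \<or> k = 0 \<or> D - n < k" by auto
  consider "\<phi> \<in> elimk \<Pi> D n" "coef \<phi> (D - n) = 0"
    | \<phi>1 \<phi>2 where "\<phi> = red (D - n) \<phi>1 \<phi>2" "\<phi>1 \<in> elimk \<Pi> D n" "\<phi>2 \<in> elimk \<Pi> D n"
    using Suc.prems(1) unfolding elimk.simps elim_def negc_def posc_def by fastforce
  then show ?case
  proof cases
    case 1
    then show ?thesis using k Suc.IH by blast
  next
    case 2
    then show ?thesis using k Suc.IH by (auto simp: red_def)
  qed
qed

lemma coef_Pis:
  assumes "\<forall>\<phi>\<in>\<Pi>. \<forall>k. (k = 0 \<or> D < k) \<longrightarrow> coef \<phi> k = 0"
    and "i \<le> D" "\<phi> \<in> Pis \<Pi> D i" "k = 0 \<or> i < k"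
  shows "coef \<phi> k = 0"
  using coef_elimk[OF assms(1), of \<phi> "D - i" k] assms(2-4) unfolding Pis_def by auto

lemma Pis_pred: "1 \<le> i \<Longrightarrow> i \<le> D \<Longrightarrow> Pis \<Pi> D (i - 1) = elim i (Pis \<Pi> D i)"
proof -
  assume "1 \<le> i" "i \<le> D"
  then have "D - (i - 1) = Suc (D - i)" "D - (D - i) = i" by auto
  then show ?thesis unfolding Pis_def by simp
qed

lemma lhs_red:
  assumes "coef \<phi>1 j < 0" "coef \<phi>2 j > 0"
  shows "lhs D (red j \<phi>1 \<phi>2) y = \<bar>coef \<phi>2 j\<bar> * lhs D \<phi>1 y + \<bar>coef \<phi>1 j\<bar> * lhs D \<phi>2 y"
proof -
  have "coef (red j \<phi>1 \<phi>2) k = coef \<phi>1 k * \<bar>coef \<phi>2 j\<bar> + coef \<phi>2 k * \<bar>coef \<phi>1 j\<bar>" for k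
    using assms by (auto simp: red_def)
  then show ?thesis
    unfolding lhs_def by (simp add: red_def sum.distrib sum_distrib_left algebra_simps)
qed

lemma sat_red:
  assumes "sat D y \<phi>1" "sat D y \<phi>2" "coef \<phi>1 j < 0" "coef \<phi>2 j > 0"
  shows "sat D y (red j \<phi>1 \<phi>2)"
proof -
  have "\<bar>coef \<phi>2 j\<bar> > 0" "\<bar>coef \<phi>1 j\<bar> > 0" using assms(3,4) by auto
  then show ?thesis
    using assms(1,2) unfolding sat_def lhs_red[OF assms(3,4)]
    by (auto simp: red_def add_pos_nonneg add_nonneg_pos split: if_splits)
qed

lemma sat_elim: "\<forall>\<phi>\<in>\<Gamma>. sat D y \<phi> \<Longrightarrow> \<forall>\<phi>\<in>elim j \<Gamma>. sat D y \<phi>"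
  unfolding elim_def negc_def posc_def by (auto intro: sat_red)

lemma sat_elimk: "\<forall>\<phi>\<in>\<Pi>. sat D y \<phi> \<Longrightarrow> \<forall>\<phi>\<in>elimk \<Pi> D n. sat D y \<phi>"
  by (induction n) (auto dest: sat_elim)

lemma sat_Pis_0:
  assumes "\<forall>\<phi>\<in>\<Pi>. \<forall>k. (k = 0 \<or> D < k) \<longrightarrow> coef \<phi> k = 0" and "satisfiable D \<Pi>"
  shows "\<forall>\<phi>\<in>Pis \<Pi> D 0. sat D y \<phi>"
proof
  fix \<phi> assume \<phi>: "\<phi> \<in> Pis \<Pi> D 0"
  obtain w where "\<forall>\<phi>\<in>\<Pi>. sat D w \<phi>" using assms(2) unfolding satisfiable_def by blast
  then have "sat D w \<phi>" using sat_elimk \<phi> unfolding Pis_def by blast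
  moreover have "lhs D \<phi> y = lhs D \<phi> w"
    using coef_Pis[OF assms(1) _ \<phi>] unfolding lhs_def by simp
  ultimately show "sat D y \<phi>" unfolding sat_def by simp
qed

section \<open>Constraints as bounds on one variable\<close>

lemma lhs_eq_coef_times_epsv:
  assumes "i \<in> {1..D}" "coef \<phi> i \<noteq> 0"
  shows "lhs D \<phi> y = coef \<phi> i * (y i - epsv D \<phi> i y)"
proof -
  let ?S = "{1..D} - {i}"
  have "lhs D \<phi> y = coef \<phi> i * y i + (\<Sum>k\<in>?S. coef \<phi> k * y k) + const \<phi>"
    unfolding lhs_def using assms(1) by (simp add: sum.remove)
  moreover have "coef \<phi> i * epsv D \<phi> i y = - (\<Sum>k\<in>?S. coef \<phi> k * y k) - const \<phi>"
    unfolding epsv_def using assms(2) by (simp add: sum_distrib_left right_diff_distrib)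
  ultimately show ?thesis by (simp add: right_diff_distrib)
qed

lemma sat_posc_iff:
  assumes "i \<in> {1..D}" "coef \<phi> i > 0"
  shows "sat D y \<phi> \<longleftrightarrow> epsv D \<phi> i y \<le> y i \<and> (strict \<phi> \<longrightarrow> epsv D \<phi> i y < y i)"
proof -
  have "lhs D \<phi> y = coef \<phi> i * (y i - epsv D \<phi> i y)"
    using assms by (intro lhs_eq_coef_times_epsv) auto
  then show ?thesis
    using assms(2) unfolding sat_def by (auto simp: zero_less_mult_iff zero_le_mult_iff)
qed

lemma sat_negc_iff:
  assumes "i \<in> {1..D}" "coef \<phi> i < 0"
  shows "sat D y \<phi> \<longleftrightarrow> y i \<le> epsv D \<phi> i y \<and> (strict \<phi> \<longrightarrow> y i < epsv D \<phi> i y)"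
proof -
  have "lhs D \<phi> y = coef \<phi> i * (y i - epsv D \<phi> i y)"
    using assms by (intro lhs_eq_coef_times_epsv) auto
  then show ?thesis
    using assms(2) unfolding sat_def by (auto simp: zero_less_mult_iff zero_le_mult_iff)
qed

lemma sat_red_iff_epsv_le:
  assumes "i \<in> {1..D}" "coef \<phi>1 i < 0" "coef \<phi>2 i > 0"
  shows "sat D y (red i \<phi>1 \<phi>2) \<longleftrightarrow>
           epsv D \<phi>2 i y \<le> epsv D \<phi>1 i y
         \<and> (strict \<phi>1 \<or> strict \<phi>2 \<longrightarrow> epsv D \<phi>2 i y < epsv D \<phi>1 i y)"
proof -
  let ?e1 = "epsv D \<phi>1 i y" and ?e2 = "epsv D \<phi>2 i y"
  have "lhs D (red i \<phi>1 \<phi>2) y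
        = \<bar>coef \<phi>2 i\<bar> * (coef \<phi>1 i * (y i - ?e1)) + \<bar>coef \<phi>1 i\<bar> * (coef \<phi>2 i * (y i - ?e2))"
    using lhs_red[OF assms(2,3)] lhs_eq_coef_times_epsv[OF assms(1)] assms(2,3) by simp
  also have "\<dots> = (- coef \<phi>1 i * coef \<phi>2 i) * (?e1 - ?e2)"
    using assms(2,3) by (simp add: abs_of_neg abs_of_pos algebra_simps)
  finally have "lhs D (red i \<phi>1 \<phi>2) y = (- coef \<phi>1 i * coef \<phi>2 i) * (?e1 - ?e2)" .
  moreover have "- coef \<phi>1 i * coef \<phi>2 i > 0" using assms(2,3) by (simp add: mult_neg_pos)
  ultimately obtain K where "K > 0" "lhs D (red i \<phi>1 \<phi>2) y = K * (?e1 - ?e2)" by blast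
  then show ?thesis
    unfolding sat_def by (auto simp: red_def zero_less_mult_iff zero_le_mult_iff)
qed

definition bounds_compatible :: "lincon set \<Rightarrow> lincon set \<Rightarrow> (lincon \<Rightarrow> real) \<Rightarrow> bool" where
  "bounds_compatible P N f \<longleftrightarrow> (\<forall>p\<in>P. \<forall>n\<in>N. f p \<le> f n \<and> (strict p \<or> strict n \<longrightarrow> f p < f n))"

definition respects_lower :: "lincon set \<Rightarrow> (lincon \<Rightarrow> real) \<Rightarrow> real \<Rightarrow> bool" where
  "respects_lower P f c \<longleftrightarrow> (\<forall>p\<in>P. f p \<le> c \<and> (strict p \<longrightarrow> f p < c))"

definition respects_upper :: "lincon set \<Rightarrow> (lincon \<Rightarrow> real) \<Rightarrow> real \<Rightarrow> bool" where
  "respects_upper N f c \<longleftrightarrow> (\<forall>n\<in>N. c \<le> f n \<and> (strict n \<longrightarrow> c < f n))"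

lemma bounds_compatible_Pis:
  assumes "i \<in> {1..D}" "\<forall>\<phi>\<in>Pis \<Pi> D (i - 1). sat D y \<phi>"
  shows "bounds_compatible (posc i (Pis \<Pi> D i)) (negc i (Pis \<Pi> D i)) (\<lambda>\<phi>. epsv D \<phi> i y)"
  unfolding bounds_compatible_def
proof (intro ballI)
  fix \<phi>2 \<phi>1 assume \<phi>2: "\<phi>2 \<in> posc i (Pis \<Pi> D i)" and \<phi>1: "\<phi>1 \<in> negc i (Pis \<Pi> D i)"
  then have "red i \<phi>1 \<phi>2 \<in> Pis \<Pi> D (i - 1)"
    using Pis_pred[of i D \<Pi>] assms(1) unfolding elim_def by auto
  then have "sat D y (red i \<phi>1 \<phi>2)" using assms(2) by blast
  then show "epsv D \<phi>2 i y \<le> epsv D \<phi>1 i y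
           \<and> (strict \<phi>2 \<or> strict \<phi>1 \<longrightarrow> epsv D \<phi>2 i y < epsv D \<phi>1 i y)"
    using sat_red_iff_epsv_le[OF assms(1)] \<phi>1 \<phi>2 by (auto simp: posc_def negc_def)
qed

section \<open>Clipping against strict and non-strict bounds\<close>

definition max_strict :: "lincon set \<Rightarrow> (lincon \<Rightarrow> real) \<Rightarrow> real \<Rightarrow> real \<Rightarrow> real" where
  "max_strict P f e a =
     (let v = max (ereal a) (SUP \<phi>\<in>P. ereal (f \<phi>)) in
      if \<exists>\<phi>\<in>P. strict \<phi> \<and> v = ereal (f \<phi>) then real_of_ereal v + e else real_of_ereal v)"

definition min_strict :: "lincon set \<Rightarrow> (lincon \<Rightarrow> real) \<Rightarrow> real \<Rightarrow> real \<Rightarrow> real" where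
  "min_strict N f e a =
     (let u = min (ereal a) (INF \<phi>\<in>N. ereal (f \<phi>)) in
      if \<exists>\<phi>\<in>N. strict \<phi> \<and> u = ereal (f \<phi>) then real_of_ereal u - e else real_of_ereal u)"

definition margins_fit :: "ereal \<Rightarrow> ereal \<Rightarrow> real \<Rightarrow> real \<Rightarrow> bool" where
  "margins_fit l u ep em \<longleftrightarrow> (l < u \<longrightarrow> l + ereal ep < u \<and> u - ereal em > l)"

lemma maxi_eq_max_strict: "maxi \<Pi> D i y = max_strict (posc i (Pis \<Pi> D i)) (\<lambda>\<phi>. epsv D \<phi> i y)"
  unfolding maxi_def[abs_def] max_strict_def[abs_def] lbv_def ..

lemma mini_eq_min_strict: "mini \<Pi> D i y = min_strict (negc i (Pis \<Pi> D i)) (\<lambda>\<phi>. epsv D \<phi> i y)"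
  unfolding mini_def[abs_def] min_strict_def[abs_def] ubv_def ..

lemma max_strict_empty [simp]: "max_strict {} f e a = a"
  by (simp add: max_strict_def)

lemma min_strict_empty [simp]: "min_strict {} f e a = a"
  by (simp add: min_strict_def)

lemma obtain_greatest:
  fixes f :: "'a \<Rightarrow> 'b::linorder"
  assumes "finite P" "P \<noteq> {}"
  obtains p0 where "p0 \<in> P" "\<forall>p\<in>P. f p \<le> f p0"
  by (metis obtains_MAX[OF assms] Max_ge finite_imageI imageI assms(1))

lemma obtain_least:
  fixes f :: "'a \<Rightarrow> 'b::linorder"
  assumes "finite N" "N \<noteq> {}"
  obtains n0 where "n0 \<in> N" "\<forall>n\<in>N. f n0 \<le> f n"
  by (metis obtains_MIN[OF assms] Min_le finite_imageI imageI assms(1))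

lemma SUP_ereal_eq_greatest:
  assumes "p0 \<in> P" "\<forall>p\<in>P. f p \<le> f p0"
  shows "(SUP \<phi>\<in>P. ereal (f \<phi>)) = ereal (f p0)"
  by (rule antisym) (auto intro!: SUP_least SUP_upper2[OF assms(1)] simp: assms(2))

lemma INF_ereal_eq_least:
  assumes "n0 \<in> N" "\<forall>n\<in>N. f n0 \<le> f n"
  shows "(INF \<phi>\<in>N. ereal (f \<phi>)) = ereal (f n0)"
  by (rule antisym) (auto intro!: INF_greatest INF_lower2[OF assms(1)] simp: assms(2))

lemma max_strict_eq_greatest:
  assumes "p0 \<in> P" "\<forall>p\<in>P. f p \<le> f p0"
  shows "max_strict P f e a =
           (if (\<exists>p\<in>P. strict p \<and> f p = f p0) \<and> a \<le> f p0 then f p0 + e else max a (f p0))"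
proof -
  have "(\<exists>p\<in>P. strict p \<and> max a (f p0) = f p) \<longleftrightarrow> (\<exists>p\<in>P. strict p \<and> f p = f p0) \<and> a \<le> f p0"
    using assms by (smt (verit, best))
  then show ?thesis
    unfolding max_strict_def SUP_ereal_eq_greatest[OF assms] Let_def
    by (auto simp: max_def)
qed

lemma min_strict_eq_least:
  assumes "n0 \<in> N" "\<forall>n\<in>N. f n0 \<le> f n"
  shows "min_strict N f e a =
           (if (\<exists>n\<in>N. strict n \<and> f n = f n0) \<and> f n0 \<le> a then f n0 - e else min a (f n0))"
proof -
  have "(\<exists>n\<in>N. strict n \<and> min a (f n0) = f n) \<longleftrightarrow> (\<exists>n\<in>N. strict n \<and> f n = f n0) \<and> f n0 \<le> a"
    using assms by (smt (verit, best))
  then show ?thesis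
    unfolding min_strict_def INF_ereal_eq_least[OF assms] Let_def
    by (auto simp: min_def)
qed

lemma respects_lower_max_strict:
  assumes "finite P" "e > 0"
  shows "respects_lower P f (max_strict P f e a)"
proof (cases "P = {}")
  case False
  then obtain p0 where p0: "p0 \<in> P" "\<forall>p\<in>P. f p \<le> f p0"
    using obtain_greatest[OF assms(1)] by metis
  show ?thesis
    unfolding respects_lower_def max_strict_eq_greatest[OF p0]
    using p0 assms(2) by (smt (verit, best))
qed (simp add: respects_lower_def)

lemma respects_upper_min_strict:
  assumes "finite N" "e > 0"
  shows "respects_upper N f (min_strict N f e a)"
proof (cases "N = {}")
  case False
  then obtain n0 where n0: "n0 \<in> N" "\<forall>n\<in>N. f n0 \<le> f n"
    using obtain_least[OF assms(1)] by metis
  show ?thesis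
    unfolding respects_upper_def min_strict_eq_least[OF n0]
    using n0 assms(2) by (smt (verit, best))
qed (simp add: respects_upper_def)

text \<open>\<open>sp\<close> (\<open>sn\<close>) records that the bound \<open>l\<close> (\<open>u\<close>) is attained by a strict
  constraint, so the clipped value has to move off it by \<open>ep\<close> (\<open>em\<close>).\<close>

lemma clamp_strict_commute:
  fixes l u a ep em :: real
  assumes "l \<le> u" "sp \<Longrightarrow> l < u" "sn \<Longrightarrow> l < u"
    and "l < u \<Longrightarrow> l + ep < u \<and> l < u - em" "ep > 0" "em > 0"
  shows "(if sn \<and> u \<le> (if sp \<and> a \<le> l then l + ep else max a l) then u - em
          else min (if sp \<and> a \<le> l then l + ep else max a l) u)
       = (if sp \<and> (if sn \<and> u \<le> a then u - em else min a u) \<le> l then l + ep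
          else max (if sn \<and> u \<le> a then u - em else min a u) l)"
  using assms by (cases "a \<le> l"; cases "u \<le> a"; cases sp; cases sn) (auto simp: max_def min_def)

lemma min_strict_max_strict_commute:
  assumes "finite P" "finite N" "bounds_compatible P N f" "ep > 0" "em > 0"
    and "margins_fit (SUP \<phi>\<in>P. ereal (f \<phi>)) (INF \<phi>\<in>N. ereal (f \<phi>)) ep em"
  shows "min_strict N f em (max_strict P f ep a) = max_strict P f ep (min_strict N f em a)"
proof (cases "P = {} \<or> N = {}")
  case False
  then obtain p0 n0 where p0: "p0 \<in> P" "\<forall>p\<in>P. f p \<le> f p0"
    and n0: "n0 \<in> N" "\<forall>n\<in>N. f n0 \<le> f n"
    using obtain_greatest[OF assms(1)] obtain_least[OF assms(2)] by metis
  have compat: "f p \<le> f n" "strict p \<or> strict n \<Longrightarrow> f p < f n" if "p \<in> P" "n \<in> N" for p n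
    using assms(3) that unfolding bounds_compatible_def by auto
  have "f p0 \<le> f n0" using compat p0(1) n0(1) by blast
  moreover have "f p0 < f n0" if "\<exists>p\<in>P. strict p \<and> f p = f p0"
    using that compat(2) n0(1) by force
  moreover have "f p0 < f n0" if "\<exists>n\<in>N. strict n \<and> f n = f n0"
    using that compat(2) p0(1) by force
  moreover have "f p0 < f n0 \<Longrightarrow> f p0 + ep < f n0 \<and> f p0 < f n0 - em"
    using assms(6) unfolding margins_fit_def SUP_ereal_eq_greatest[OF p0] INF_ereal_eq_least[OF n0]
    by simp
  ultimately show ?thesis
    unfolding max_strict_eq_greatest[OF p0] min_strict_eq_least[OF n0]
    using clamp_strict_commute assms(4,5) by blast
qed auto

lemma clvec_prefix: "k \<le> m \<Longrightarrow> m \<le> n \<Longrightarrow> clvec \<Pi> D x ep em n k = clvec \<Pi> D x ep em m k"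
  by (induction n) (auto simp: Let_def le_Suc_eq)

lemma epsv_cong:
  assumes "\<forall>k. 0 < k \<and> k < i \<longrightarrow> y k = y' k" "\<forall>k. i < k \<longrightarrow> coef \<phi> k = 0"
  shows "epsv D \<phi> i y = epsv D \<phi> i y'"
proof -
  have "(coef \<phi> k / coef \<phi> i) * y k = (coef \<phi> k / coef \<phi> i) * y' k" if "k \<in> {1..D} - {i}" for k
    using assms that by (cases "k < i") auto
  then have "(\<Sum>k\<in>{1..D} - {i}. (coef \<phi> k / coef \<phi> i) * y k)
           = (\<Sum>k\<in>{1..D} - {i}. (coef \<phi> k / coef \<phi> i) * y' k)"
    by (rule sum.cong[OF refl])
  then show ?thesis unfolding epsv_def by simp
qed

lemma maxi_mini_cong:
  assumes "\<forall>\<phi>\<in>Pis \<Pi> D i. epsv D \<phi> i y = epsv D \<phi> i y'"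
  shows "maxi \<Pi> D i y = maxi \<Pi> D i y'" "mini \<Pi> D i y = mini \<Pi> D i y'"
proof -
  have "\<forall>\<phi>\<in>posc i (Pis \<Pi> D i). epsv D \<phi> i y = epsv D \<phi> i y'"
       "\<forall>\<phi>\<in>negc i (Pis \<Pi> D i). epsv D \<phi> i y = epsv D \<phi> i y'"
    using assms by (auto simp: posc_def negc_def)
  then show "maxi \<Pi> D i y = maxi \<Pi> D i y'" "mini \<Pi> D i y = mini \<Pi> D i y'"
    unfolding maxi_def[abs_def] mini_def[abs_def] lbv_def ubv_def
    by (simp_all cong: image_cong bex_cong)
qed

lemma CL_eq_mini_maxi:
  fixes x ep em :: "nat \<Rightarrow> real"
  assumes "\<forall>\<phi>\<in>\<Pi>. \<forall>k. (k = 0 \<or> D < k) \<longrightarrow> coef \<phi> k = 0" and i: "i \<in> {1..D}"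
  defines "y \<equiv> CL \<Pi> D x ep em"
  shows "y i = mini \<Pi> D i y (em i) (maxi \<Pi> D i y (ep i) (x i))"
proof -
  define z where "z = clvec \<Pi> D x ep em (i - 1)"
  have "y i = clvec \<Pi> D x ep em i i"
    unfolding y_def CL_def using i by (intro clvec_prefix) auto
  also have "\<dots> = mini \<Pi> D i z (em i) (maxi \<Pi> D i z (ep i) (x i))"
    using i by (cases i) (auto simp: z_def Let_def)
  also have "\<dots> = mini \<Pi> D i y (em i) (maxi \<Pi> D i y (ep i) (x i))"
  proof -
    have "\<forall>k. 0 < k \<and> k < i \<longrightarrow> z k = y k"
      unfolding z_def y_def CL_def using i by (auto intro!: clvec_prefix[symmetric])
    then have "\<forall>\<phi>\<in>Pis \<Pi> D i. epsv D \<phi> i z = epsv D \<phi> i y"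
      using coef_Pis[OF assms(1)] i by (auto intro!: epsv_cong)
    then show ?thesis using maxi_mini_cong by metis
  qed
  finally show ?thesis .
qed

lemma lbv_le_ubv:
  assumes "i \<in> {1..D}" "\<forall>\<phi>\<in>Pis \<Pi> D (i - 1). sat D y \<phi>"
  shows "lbv \<Pi> D i y \<le> ubv \<Pi> D i y"
  using bounds_compatible_Pis[OF assms] unfolding lbv_def ubv_def bounds_compatible_def
  by (auto intro!: SUP_least INF_greatest)

lemma mini_maxi_commute:
  assumes "finite \<Pi>" "i \<in> {1..D}" "\<forall>\<phi>\<in>Pis \<Pi> D (i - 1). sat D y \<phi>"
    and "ep > 0" "em > 0" "margins_fit (lbv \<Pi> D i y) (ubv \<Pi> D i y) ep em"
  shows "mini \<Pi> D i y em (maxi \<Pi> D i y ep a) = maxi \<Pi> D i y ep (mini \<Pi> D i y em a)"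
proof -
  have "finite (Pis \<Pi> D i)" unfolding Pis_def using finite_elimk[OF assms(1)] .
  then show ?thesis
    unfolding maxi_eq_max_strict mini_eq_min_strict
    using assms(4-6) bounds_compatible_Pis[OF assms(2,3)]
    by (intro min_strict_max_strict_commute) (auto simp: posc_def negc_def lbv_def ubv_def)
qed

lemma sat_Pis_if_clipped:
  assumes "finite \<Pi>" "i \<in> {1..D}" "\<forall>\<phi>\<in>Pis \<Pi> D (i - 1). sat D y \<phi>"
    and "ep > 0" "em > 0" "margins_fit (lbv \<Pi> D i y) (ubv \<Pi> D i y) ep em"
    and yi: "y i = mini \<Pi> D i y em (maxi \<Pi> D i y ep a)"
  shows "\<forall>\<phi>\<in>Pis \<Pi> D i. sat D y \<phi>"
proof
  fix \<phi> assume \<phi>: "\<phi> \<in> Pis \<Pi> D i"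
  have fin: "finite (Pis \<Pi> D i)" unfolding Pis_def using finite_elimk[OF assms(1)] .
  have "respects_upper (negc i (Pis \<Pi> D i)) (\<lambda>\<phi>. epsv D \<phi> i y) (y i)"
    unfolding yi mini_eq_min_strict
    using fin assms(5) by (intro respects_upper_min_strict) (auto simp: negc_def)
  moreover have "respects_lower (posc i (Pis \<Pi> D i)) (\<lambda>\<phi>. epsv D \<phi> i y) (y i)"
    unfolding yi mini_maxi_commute[OF assms(1-6)] unfolding maxi_eq_max_strict
    using fin assms(4) by (intro respects_lower_max_strict) (auto simp: posc_def)
  moreover have "\<phi> \<in> Pis \<Pi> D (i - 1)" if "coef \<phi> i = 0"
    using Pis_pred[of i D \<Pi>] assms(2) \<phi> that unfolding elim_def negc_def posc_def by auto
  ultimately show "sat D y \<phi>"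
    using assms(2,3) \<phi> sat_posc_iff[OF assms(2)] sat_negc_iff[OF assms(2)]
    unfolding respects_lower_def respects_upper_def posc_def negc_def
    by (metis (mono_tags, lifting) linorder_neqE_linordered_idom mem_Collect_eq)
qed

theorem corollary1:
  fixes D :: nat and \<Pi> :: "lincon set" and x ep em :: "nat \<Rightarrow> real"
  assumes "finite \<Pi>"
    and "\<forall>\<phi>\<in>\<Pi>. \<forall>k. (k = 0 \<or> D < k) \<longrightarrow> coef \<phi> k = 0"
    and "satisfiable D \<Pi>"
    and "\<forall>i\<in>{1..D}. ep i > 0 \<and> em i > 0
          \<and> (lbv \<Pi> D i (CL \<Pi> D x ep em) < ubv \<Pi> D i (CL \<Pi> D x ep em) \<longrightarrow>
               lbv \<Pi> D i (CL \<Pi> D x ep em) + ereal (ep i) < ubv \<Pi> D i (CL \<Pi> D x ep em)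
             \<and> ubv \<Pi> D i (CL \<Pi> D x ep em) - ereal (em i) > lbv \<Pi> D i (CL \<Pi> D x ep em))"
  shows "\<forall>i\<in>{1..D}.
           lbv \<Pi> D i (CL \<Pi> D x ep em) \<le> ubv \<Pi> D i (CL \<Pi> D x ep em)
         \<and> CL \<Pi> D x ep em i
             = mini \<Pi> D i (CL \<Pi> D x ep em) (em i) (maxi \<Pi> D i (CL \<Pi> D x ep em) (ep i) (x i))
         \<and> CL \<Pi> D x ep em i
             = maxi \<Pi> D i (CL \<Pi> D x ep em) (ep i) (mini \<Pi> D i (CL \<Pi> D x ep em) (em i) (x i))"
proof -
  define y where "y = CL \<Pi> D x ep em"
  have eps: "ep i > 0" "em i > 0" "margins_fit (lbv \<Pi> D i y) (ubv \<Pi> D i y) (ep i) (em i)"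
    if "i \<in> {1..D}" for i
    using assms(4) that unfolding margins_fit_def y_def by auto
  have yi: "y i = mini \<Pi> D i y (em i) (maxi \<Pi> D i y (ep i) (x i))" if "i \<in> {1..D}" for i
    using CL_eq_mini_maxi[OF assms(2) that] unfolding y_def .
  have prefix_sat: "\<forall>\<phi>\<in>Pis \<Pi> D i. sat D y \<phi>" if "i \<le> D" for i
    using that
  proof (induction i)
    case 0
    show ?case using sat_Pis_0[OF assms(2,3)] .
  next
    case (Suc i)
    then have i: "Suc i \<in> {1..D}" by simp
    then show ?case using sat_Pis_if_clipped[OF assms(1) i _ eps[OF i] yi[OF i]] Suc by simp
  qed
  show ?thesis
  proof
    fix i assume i: "i \<in> {1..D}"
    then have "\<forall>\<phi>\<in>Pis \<Pi> D (i - 1). sat D y \<phi>" by (intro prefix_sat) auto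
    then show "lbv \<Pi> D i (CL \<Pi> D x ep em) \<le> ubv \<Pi> D i (CL \<Pi> D x ep em)
         \<and> CL \<Pi> D x ep em i
             = mini \<Pi> D i (CL \<Pi> D x ep em) (em i) (maxi \<Pi> D i (CL \<Pi> D x ep em) (ep i) (x i))
         \<and> CL \<Pi> D x ep em i
             = maxi \<Pi> D i (CL \<Pi> D x ep em) (ep i) (mini \<Pi> D i (CL \<Pi> D x ep em) (em i) (x i))"
      using lbv_le_ubv[OF i] mini_maxi_commute[OF assms(1) i _ eps[OF i]] yi[OF i]
      unfolding y_def by simp
  qed
qed

end
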